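(* Let $\Bbbk$ be an algebraically closed field of characteristic zero, $G$ a finite group, $\chi:G\to\Bbbk^\times$ a linear character, $g\in Z(G)$, $n\geq2$ the multiplicative order of $\chi(g)$, and $H$ the $\Bbbk$-algebra generated by $\Bbbk G$ and $z$ with relations $z^n=0$, $zs=\chi(s)sz$ ($s\in G$). Then for each $0\leq m\leq n-1$, the $2^p-1$ ideals $\big(z^m\sum_{i\in S}e_i\big)$, for $S$ ranging over the nonempty subsets of $\{0,1,\dots,p-1\}$, are pairwise distinct.
   Context: $\chi_0,\dots,\chi_{p-1}$ are the irreducible characters of $G$ and $e_i=\frac{\chi_i(1)}{|G|}\sum_{h\in G}\chi_i(h)h^{-1}$ (so $\sum_{i=0}^{p-1}e_i=1$). $(a)$ denotes the two-sided ideal of $H$ generated by $a$. *)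

theory Defs
  imports "Jordan_Normal_Form.Matrix" "HOL-Computational_Algebra.Polynomial"
begin

definition alg_closed_field :: "'k::field itself \<Rightarrow> bool" where
  "alg_closed_field _ \<longleftrightarrow> (\<forall>q :: 'k poly. degree q \<ge> 1 \<longrightarrow> (\<exists>x. poly q x = 0))"

definition mat_trace :: "'k::comm_ring_1 mat \<Rightarrow> 'k" where
  "mat_trace A = (\<Sum>i<dim_row A. A $$ (i, i))"

definition is_rep :: "('g, 'b) monoid_scheme \<Rightarrow> nat \<Rightarrow> ('g \<Rightarrow> 'k::field mat) \<Rightarrow> bool" where
  "is_rep G d \<rho> \<longleftrightarrow>
     (\<forall>s\<in>carrier G. \<rho> s \<in> carrier_mat d d) \<and>
     \<rho> \<one>\<^bsub>G\<^esub> = one_mat d \<and>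
     (\<forall>s\<in>carrier G. \<forall>t\<in>carrier G. \<rho> (s \<otimes>\<^bsub>G\<^esub> t) = \<rho> s * \<rho> t)"

definition invariant_subspace :: "('g, 'b) monoid_scheme \<Rightarrow> nat \<Rightarrow> ('g \<Rightarrow> 'k::field mat) \<Rightarrow> 'k vec set \<Rightarrow> bool" where
  "invariant_subspace G d \<rho> W \<longleftrightarrow>
     W \<subseteq> carrier_vec d \<and> 0\<^sub>v d \<in> W \<and>
     (\<forall>v\<in>W. \<forall>w\<in>W. v + w \<in> W) \<and>
     (\<forall>c. \<forall>v\<in>W. c \<cdot>\<^sub>v v \<in> W) \<and>
     (\<forall>s\<in>carrier G. \<forall>v\<in>W. \<rho> s *\<^sub>v v \<in> W)"

definition irreducible_rep :: "('g, 'b) monoid_scheme \<Rightarrow> nat \<Rightarrow> ('g \<Rightarrow> 'k::field mat) \<Rightarrow> bool" where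
  "irreducible_rep G d \<rho> \<longleftrightarrow> d > 0 \<and> is_rep G d \<rho> \<and>
     (\<forall>W. invariant_subspace G d \<rho> W \<longrightarrow> W = {0\<^sub>v d} \<or> W = carrier_vec d)"

definition rep_character :: "('g, 'b) monoid_scheme \<Rightarrow> ('g \<Rightarrow> 'k::field mat) \<Rightarrow> 'g \<Rightarrow> 'k" where
  "rep_character G \<rho> = restrict (\<lambda>s. mat_trace (\<rho> s)) (carrier G)"

definition irr_chars :: "('g, 'b) monoid_scheme \<Rightarrow> ('g \<Rightarrow> 'k::field) set" where
  "irr_chars G = {rep_character G \<rho> | \<rho> d. irreducible_rep G d \<rho>}"

text \<open>H has k-basis { s z^j : s in G, 0 <= j < n }; an element is its coefficient function
  (s, j) \<mapsto> coefficient of s z^j, vanishing outside G x {0..<n}.  This is the standard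
  basis of the algebra generated by kG and z with z^n = 0 and z s = chi(s) s z.\<close>

definition Hcarrier :: "('g, 'b) monoid_scheme \<Rightarrow> nat \<Rightarrow> ('g \<Rightarrow> nat \<Rightarrow> 'k::field) set" where
  "Hcarrier G n = {f. \<forall>s j. (s \<notin> carrier G \<or> j \<ge> n) \<longrightarrow> f s j = 0}"

definition Hzero :: "'g \<Rightarrow> nat \<Rightarrow> 'k::field" where
  "Hzero = (\<lambda>s j. 0)"

definition Hadd :: "('g \<Rightarrow> nat \<Rightarrow> 'k::field) \<Rightarrow> ('g \<Rightarrow> nat \<Rightarrow> 'k) \<Rightarrow> 'g \<Rightarrow> nat \<Rightarrow> 'k" where
  "Hadd a b = (\<lambda>s j. a s j + b s j)"

text \<open>Multiplication: (s z^a)(t z^b) = chi(t)^a (s t) z^(a+b), which is 0 if a + b >= n.\<close>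
definition Hmult :: "('g, 'b) monoid_scheme \<Rightarrow> ('g \<Rightarrow> 'k::field) \<Rightarrow> nat \<Rightarrow>
    ('g \<Rightarrow> nat \<Rightarrow> 'k) \<Rightarrow> ('g \<Rightarrow> nat \<Rightarrow> 'k) \<Rightarrow> 'g \<Rightarrow> nat \<Rightarrow> 'k" where
  "Hmult G \<chi> n a b = (\<lambda>u j. if u \<in> carrier G \<and> j < n then
      (\<Sum>s\<in>carrier G. \<Sum>i\<le>j. a s i * b (inv\<^bsub>G\<^esub> s \<otimes>\<^bsub>G\<^esub> u) (j - i) * (\<chi> (inv\<^bsub>G\<^esub> s \<otimes>\<^bsub>G\<^esub> u)) ^ i)
    else 0)"

definition Hbasis :: "'g \<Rightarrow> nat \<Rightarrow> 'g \<Rightarrow> nat \<Rightarrow> 'k::field" where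
  "Hbasis s j = (\<lambda>u i. if u = s \<and> i = j then 1 else 0)"

definition Hideal :: "('g, 'b) monoid_scheme \<Rightarrow> ('g \<Rightarrow> 'k::field) \<Rightarrow> nat \<Rightarrow> ('g \<Rightarrow> nat \<Rightarrow> 'k) set \<Rightarrow> bool" where
  "Hideal G \<chi> n I \<longleftrightarrow> I \<subseteq> Hcarrier G n \<and> Hzero \<in> I \<and>
     (\<forall>a\<in>I. \<forall>b\<in>I. Hadd a b \<in> I) \<and>
     (\<forall>h\<in>Hcarrier G n. \<forall>a\<in>I. Hmult G \<chi> n h a \<in> I \<and> Hmult G \<chi> n a h \<in> I)"

definition Hideal_gen :: "('g, 'b) monoid_scheme \<Rightarrow> ('g \<Rightarrow> 'k::field) \<Rightarrow> nat \<Rightarrow> ('g \<Rightarrow> nat \<Rightarrow> 'k) \<Rightarrow> ('g \<Rightarrow> nat \<Rightarrow> 'k) set" where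
  "Hideal_gen G \<chi> n x = \<Inter>{I. Hideal G \<chi> n I \<and> x \<in> I}"

text \<open>e_psi = psi(1)/|G| * sum_{h in G} psi(h) h^{-1}, for a character psi.\<close>
definition char_idem :: "('g, 'b) monoid_scheme \<Rightarrow> ('g \<Rightarrow> 'k::field) \<Rightarrow> 'g \<Rightarrow> nat \<Rightarrow> 'k" where
  "char_idem G \<psi> = (\<lambda>u j. if u \<in> carrier G \<and> j = 0 then
      \<psi> \<one>\<^bsub>G\<^esub> / of_nat (card (carrier G)) * \<psi> (inv\<^bsub>G\<^esub> u) else 0)"

definition idem_sum :: "('g, 'b) monoid_scheme \<Rightarrow> ('g \<Rightarrow> 'k::field) set \<Rightarrow> 'g \<Rightarrow> nat \<Rightarrow> 'k" where
  "idem_sum G S = (\<lambda>u j. \<Sum>\<psi>\<in>S. char_idem G \<psi> u j)"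

end

theory Submission
  imports Defs "Jordan_Normal_Form.Char_Poly" "HOL-Library.Function_Algebras"
begin

(* Choose psi in S but not in T (or vice versa) and write f_m in kG for the z^m-coefficient of f in H.
   The f in z^m H with f_m chi^m e_psi = 0 form a two-sided ideal of H: multiplying f by h on the left
   multiplies f_m on the left by h_0, multiplying on the right multiplies f_m on the right by
   chi^m h_0, and chi^m e_psi commutes with chi^m h_0 because twisting by chi^m is an automorphism
   of kG and e_psi is central. Since the e_phi are orthogonal idempotents (by Schur's lemma and the
   orthogonality relations, which need k algebraically closed of characteristic zero), this ideal
   contains z^m e_T but not z^m e_S. *)

lemma mat_trace_eq_sum: "A \<in> carrier_mat r r \<Longrightarrow> mat_trace A = (\<Sum>i\<in>{0..<r}. A $$ (i,i))"
  by (simp add: mat_trace_def lessThan_atLeast0)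

lemma mat_trace_mult_comm:
  assumes A: "A \<in> carrier_mat r c" and B: "B \<in> carrier_mat c r"
  shows "mat_trace (A * B) = mat_trace (B * A)"
proof -
  have "mat_trace (A * B) = (\<Sum>i\<in>{0..<r}. \<Sum>k\<in>{0..<c}. A $$ (i,k) * B $$ (k,i))"
    using A B by (simp add: mat_trace_eq_sum[of _ r] scalar_prod_def)
  also have "\<dots> = (\<Sum>k\<in>{0..<c}. \<Sum>i\<in>{0..<r}. B $$ (k,i) * A $$ (i,k))"
    by (subst sum.swap) (simp add: mult.commute)
  also have "\<dots> = mat_trace (B * A)"
    using A B by (simp add: mat_trace_eq_sum[of _ c] scalar_prod_def)
  finally show ?thesis .
qed

lemma mat_eq_zero_if_unit_vecs:
  assumes C: "(C :: 'a :: comm_ring_1 mat) \<in> carrier_mat r c"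
    and zero: "\<And>j. j < c \<Longrightarrow> C *\<^sub>v unit_vec c j = 0\<^sub>v r"
  shows "C = 0\<^sub>m r c"
proof (rule eq_matI)
  fix i j assume "i < dim_row (0\<^sub>m r c)" "j < dim_col (0\<^sub>m r c)"
  moreover from this have "C $$ (i,j) = (C *\<^sub>v unit_vec c j) $ i" using C by simp
  ultimately show "C $$ (i,j) = 0\<^sub>m r c $$ (i,j)" using zero by simp
qed (use C in auto)

lemma mult_mat_vec_zero: "(C :: 'a :: comm_ring_1 mat) \<in> carrier_mat r c \<Longrightarrow> C *\<^sub>v 0\<^sub>v c = 0\<^sub>v r"
  by (intro eq_vecI) (auto simp: scalar_prod_def)

lemma smult_one_mat_vec:
  assumes "(v :: 'a :: comm_ring_1 vec) \<in> carrier_vec d"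
  shows "(k \<cdot>\<^sub>m 1\<^sub>m d) *\<^sub>v v = k \<cdot>\<^sub>v v"
proof -
  have "k \<cdot>\<^sub>v v = k \<cdot>\<^sub>v (1\<^sub>m d *\<^sub>v v)" using assms by simp
  also have "\<dots> = (k \<cdot>\<^sub>m 1\<^sub>m d) *\<^sub>v v" using assms by auto
  finally show ?thesis by simp
qed

subsection \<open>Schur's lemma\<close>

lemma is_rep_carrier: "is_rep G d \<rho> \<Longrightarrow> s \<in> carrier G \<Longrightarrow> \<rho> s \<in> carrier_mat d d"
  by (simp add: is_rep_def)

lemma is_rep_mult:
  "is_rep G d \<rho> \<Longrightarrow> s \<in> carrier G \<Longrightarrow> t \<in> carrier G \<Longrightarrow> \<rho> (s \<otimes>\<^bsub>G\<^esub> t) = \<rho> s * \<rho> t"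
  by (simp add: is_rep_def)

lemma irreducible_repD:
  "irreducible_rep G d \<rho> \<Longrightarrow> is_rep G d \<rho>"
  "irreducible_rep G d \<rho> \<Longrightarrow> d > 0"
  by (simp_all add: irreducible_rep_def)

lemma irreducible_rep_invariant_subspace:
  "irreducible_rep G d \<rho> \<Longrightarrow> invariant_subspace G d \<rho> W \<Longrightarrow> W = {0\<^sub>v d} \<or> W = carrier_vec d"
  by (simp add: irreducible_rep_def)

definition intertwines :: "('g, 'b) monoid_scheme \<Rightarrow> ('g \<Rightarrow> 'k::field mat) \<Rightarrow> ('g \<Rightarrow> 'k mat) \<Rightarrow> 'k mat \<Rightarrow> bool" where
  "intertwines G \<rho> \<sigma> C \<longleftrightarrow> (\<forall>s\<in>carrier G. \<rho> s * C = C * \<sigma> s)"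

lemma intertwiner_kernel_trivial:
  assumes irr: "irreducible_rep G d' \<sigma>" and C: "C \<in> carrier_mat r d'"
    and \<rho>: "\<forall>s\<in>carrier G. \<rho> s \<in> carrier_mat r r" and inter: "intertwines G \<rho> \<sigma> C"
    and nz: "C \<noteq> 0\<^sub>m r d'"
    and v: "v \<in> carrier_vec d'" "C *\<^sub>v v = 0\<^sub>v r"
  shows "v = 0\<^sub>v d'"
proof -
  let ?W = "{v\<in>carrier_vec d'. C *\<^sub>v v = 0\<^sub>v r}"
  have \<sigma>: "\<And>s. s \<in> carrier G \<Longrightarrow> \<sigma> s \<in> carrier_mat d' d'"
    using irreducible_repD(1)[OF irr] by (rule is_rep_carrier)
  have "invariant_subspace G d' \<sigma> ?W"
    unfolding invariant_subspace_def
  proof (intro conjI ballI allI)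
    show "?W \<subseteq> carrier_vec d'" by auto
    show "0\<^sub>v d' \<in> ?W" using C by (simp add: mult_mat_vec_zero)
    fix x assume x: "x \<in> ?W"
    show "x + y \<in> ?W" if "y \<in> ?W" for y
      using x that C by (simp add: mult_add_distrib_mat_vec)
    show "c \<cdot>\<^sub>v x \<in> ?W" for c
      using x C by (auto simp: mult_mat_vec)
    show "\<sigma> s *\<^sub>v x \<in> ?W" if s: "s \<in> carrier G" for s
    proof -
      have "C *\<^sub>v (\<sigma> s *\<^sub>v x) = (\<rho> s * C) *\<^sub>v x"
        using C \<sigma>[OF s] x inter s by (simp add: intertwines_def assoc_mult_mat_vec)
      also have "\<dots> = \<rho> s *\<^sub>v (C *\<^sub>v x)" using C \<rho> s x by (intro assoc_mult_mat_vec) auto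
      also have "\<dots> = 0\<^sub>v r" using \<rho> s x by (simp add: mult_mat_vec_zero)
      finally show ?thesis using \<sigma>[OF s] x by simp
    qed
  qed
  then have "?W = {0\<^sub>v d'} \<or> ?W = carrier_vec d'"
    by (rule irreducible_rep_invariant_subspace[OF irr])
  moreover have "?W \<noteq> carrier_vec d'"
    using C nz mat_eq_zero_if_unit_vecs[OF C] unit_vec_carrier by blast
  ultimately have "?W = {0\<^sub>v d'}" by blast
  then show ?thesis using v by blast
qed

lemma intertwiner_surjective:
  assumes irr: "irreducible_rep G d \<rho>" and C: "C \<in> carrier_mat d c"
    and \<sigma>: "\<forall>s\<in>carrier G. \<sigma> s \<in> carrier_mat c c" and inter: "intertwines G \<rho> \<sigma> C"
    and nz: "C \<noteq> 0\<^sub>m d c" and y: "y \<in> carrier_vec d"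
  shows "\<exists>v\<in>carrier_vec c. C *\<^sub>v v = y"
proof -
  let ?W = "(\<lambda>v. C *\<^sub>v v) ` carrier_vec c"
  have \<rho>: "\<And>s. s \<in> carrier G \<Longrightarrow> \<rho> s \<in> carrier_mat d d"
    using irreducible_repD(1)[OF irr] by (rule is_rep_carrier)
  have "invariant_subspace G d \<rho> ?W"
    unfolding invariant_subspace_def
  proof (intro conjI ballI allI)
    show "?W \<subseteq> carrier_vec d" using C by auto
    show "0\<^sub>v d \<in> ?W" using C by (auto intro!: image_eqI[of _ _ "0\<^sub>v c"] simp: mult_mat_vec_zero)
    fix x assume "x \<in> ?W"
    then obtain a where a: "a \<in> carrier_vec c" "x = C *\<^sub>v a" by auto
    show "x + y \<in> ?W" if "y \<in> ?W" for y
    proof -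
      obtain b where "b \<in> carrier_vec c" "y = C *\<^sub>v b" using \<open>y \<in> ?W\<close> by auto
      then show ?thesis using a C by (auto intro!: image_eqI[of _ _ "a + b"] simp: mult_add_distrib_mat_vec)
    qed
    show "k \<cdot>\<^sub>v x \<in> ?W" for k
      using a C by (auto intro!: image_eqI[of _ _ "k \<cdot>\<^sub>v a"] simp: mult_mat_vec)
    show "\<rho> s *\<^sub>v x \<in> ?W" if s: "s \<in> carrier G" for s
    proof -
      have "\<rho> s *\<^sub>v x = (\<rho> s * C) *\<^sub>v a"
        using C \<rho>[OF s] a by (simp add: assoc_mult_mat_vec)
      also have "\<dots> = (C * \<sigma> s) *\<^sub>v a" using inter s by (simp add: intertwines_def)
      also have "\<dots> = C *\<^sub>v (\<sigma> s *\<^sub>v a)" using C \<sigma> s a by (intro assoc_mult_mat_vec) auto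
      finally show ?thesis using \<sigma> s a by auto
    qed
  qed
  then have "?W = {0\<^sub>v d} \<or> ?W = carrier_vec d"
    by (rule irreducible_rep_invariant_subspace[OF irr])
  moreover have "?W \<noteq> {0\<^sub>v d}"
    using C nz mat_eq_zero_if_unit_vecs[OF C] unit_vec_carrier by blast
  ultimately have "?W = carrier_vec d" by blast
  then show ?thesis using y by (metis imageE)
qed

lemma intertwiner_invertible:
  assumes irr\<rho>: "irreducible_rep G d \<rho>" and irr\<sigma>: "irreducible_rep G d' \<sigma>"
    and A: "A \<in> carrier_mat d d'" and inter: "intertwines G \<rho> \<sigma> A" and nz: "A \<noteq> 0\<^sub>m d d'"
  obtains B where "B \<in> carrier_mat d' d" "A * B = 1\<^sub>m d" "B * A = 1\<^sub>m d'"
proof -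
  have \<rho>: "\<forall>s\<in>carrier G. \<rho> s \<in> carrier_mat d d" and \<sigma>: "\<forall>s\<in>carrier G. \<sigma> s \<in> carrier_mat d' d'"
    using irreducible_repD(1)[OF irr\<rho>] irreducible_repD(1)[OF irr\<sigma>] by (auto simp: is_rep_carrier)
  have "\<forall>k. \<exists>v. k < d \<longrightarrow> v \<in> carrier_vec d' \<and> A *\<^sub>v v = unit_vec d k"
    using intertwiner_surjective[OF irr\<rho> A \<sigma> inter nz] unit_vec_carrier by metis
  then obtain pre where pre: "\<And>k. k < d \<Longrightarrow> pre k \<in> carrier_vec d' \<and> A *\<^sub>v pre k = unit_vec d k"
    by metis
  define B where "B = mat d' d (\<lambda>(i,k). pre k $ i)"
  have B: "B \<in> carrier_mat d' d" by (simp add: B_def)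
  have AB: "A * B = 1\<^sub>m d"
  proof (rule eq_matI)
    fix i k assume "i < dim_row (1\<^sub>m d)" "k < dim_col (1\<^sub>m d)"
    then have i: "i < d" and k: "k < d" by auto
    have "col B k = pre k" using pre[OF k] k by (auto simp: B_def intro!: eq_vecI)
    then have "(A * B) $$ (i,k) = (A *\<^sub>v pre k) $ i" using A B i k by simp
    then show "(A * B) $$ (i,k) = 1\<^sub>m d $$ (i,k)" using pre i k by simp
  qed (use A B in auto)
  have "A * (B * A - 1\<^sub>m d') = A * (B * A) - A * 1\<^sub>m d'"
    using A B by (intro mult_minus_distrib_mat) auto
  also have "\<dots> = (A * B) * A - A" using A B by simp
  also have "\<dots> = 0\<^sub>m d d'" using A AB by simp
  finally have A_BA: "A * (B * A - 1\<^sub>m d') = 0\<^sub>m d d'" .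
  have "B * A - 1\<^sub>m d' = 0\<^sub>m d' d'"
  proof (rule mat_eq_zero_if_unit_vecs)
    fix j assume "j < d'"
    have "A *\<^sub>v ((B * A - 1\<^sub>m d') *\<^sub>v unit_vec d' j) = (A * (B * A - 1\<^sub>m d')) *\<^sub>v unit_vec d' j"
      using A B by (intro assoc_mult_mat_vec[symmetric]) auto
    also have "\<dots> = 0\<^sub>v d" unfolding A_BA by (intro eq_vecI) auto
    finally show "(B * A - 1\<^sub>m d') *\<^sub>v unit_vec d' j = 0\<^sub>v d'"
      using A B by (intro intertwiner_kernel_trivial[OF irr\<sigma> A \<rho> inter nz] mult_mat_vec_carrier[of _ d' d']) auto
  qed (use A B in auto)
  then have "B * A = 1\<^sub>m d'"
    using A B by (auto simp: mat_eq_iff)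
  with B AB show ?thesis by (rule that)
qed

lemma schur_rep_character_eq:
  assumes irr\<rho>: "irreducible_rep G d \<rho>" and irr\<sigma>: "irreducible_rep G d' \<sigma>"
    and A: "A \<in> carrier_mat d d'" and inter: "intertwines G \<rho> \<sigma> A" and nz: "A \<noteq> 0\<^sub>m d d'"
  shows "rep_character G \<rho> = rep_character G \<sigma>"
proof -
  obtain B where B: "B \<in> carrier_mat d' d" and AB: "A * B = 1\<^sub>m d" and BA: "B * A = 1\<^sub>m d'"
    using intertwiner_invertible[OF assms] .
  have "mat_trace (\<sigma> s) = mat_trace (\<rho> s)" if s: "s \<in> carrier G" for s
  proof -
    have \<rho>: "\<rho> s \<in> carrier_mat d d" and \<sigma>: "\<sigma> s \<in> carrier_mat d' d'"
      using s irreducible_repD(1)[OF irr\<rho>] irreducible_repD(1)[OF irr\<sigma>] by (auto simp: is_rep_carrier)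
    have "\<sigma> s = B * (\<rho> s * A)"
      using A B \<sigma> BA inter s by (simp add: intertwines_def assoc_mult_mat[symmetric])
    then have "mat_trace (\<sigma> s) = mat_trace ((\<rho> s * A) * B)"
      using A B \<rho> by (simp add: mat_trace_mult_comm[of B d' d])
    also have "\<dots> = mat_trace (\<rho> s)" using A B \<rho> AB by (simp add: assoc_mult_mat)
    finally show ?thesis .
  qed
  then show ?thesis unfolding rep_character_def by (intro restrict_ext) simp
qed

lemma schur_scalar:
  assumes ac: "alg_closed_field TYPE('k::field)"
    and irr: "irreducible_rep G d \<rho>" and A: "(A :: 'k mat) \<in> carrier_mat d d"
    and inter: "intertwines G \<rho> \<rho> A"
  shows "\<exists>l. A = l \<cdot>\<^sub>m 1\<^sub>m d"
proof -
  have \<rho>: "\<forall>s\<in>carrier G. \<rho> s \<in> carrier_mat d d"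
    using irreducible_repD(1)[OF irr] by (simp add: is_rep_carrier)
  have "degree (char_poly A) \<ge> 1"
    using degree_monic_char_poly[OF A] irreducible_repD(2)[OF irr] by simp
  then obtain l where "poly (char_poly A) l = 0" using ac unfolding alg_closed_field_def by blast
  then obtain v where v: "v \<in> carrier_vec d" "v \<noteq> 0\<^sub>v d" "A *\<^sub>v v = l \<cdot>\<^sub>v v"
    using A eigenvalue_root_char_poly[OF A] unfolding eigenvalue_def eigenvector_def by auto
  define C where "C = A - l \<cdot>\<^sub>m 1\<^sub>m d"
  have C: "C \<in> carrier_mat d d" using A unfolding C_def by (intro minus_carrier_mat) auto
  have "C *\<^sub>v v = 0\<^sub>v d"
    using A v by (simp add: C_def minus_mult_distrib_mat_vec smult_one_mat_vec)
  moreover have "intertwines G \<rho> \<rho> C"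
    unfolding intertwines_def
  proof
    fix s assume s: "s \<in> carrier G"
    then have \<rho>s: "\<rho> s \<in> carrier_mat d d" using \<rho> by simp
    have "\<rho> s * C = \<rho> s * A - l \<cdot>\<^sub>m \<rho> s"
      using A \<rho>s by (simp add: C_def mult_minus_distrib_mat[of _ d d] mult_smult_distrib[OF \<rho>s one_carrier_mat])
    also have "\<dots> = A * \<rho> s - l \<cdot>\<^sub>m \<rho> s" using inter s by (simp add: intertwines_def)
    also have "\<dots> = C * \<rho> s"
      using A \<rho>s by (simp add: C_def minus_mult_distrib_mat[of _ d d] mult_smult_assoc_mat[OF one_carrier_mat \<rho>s])
    finally show "\<rho> s * C = C * \<rho> s" .
  qed
  ultimately have "C = 0\<^sub>m d d"
    using intertwiner_kernel_trivial[OF irr C \<rho>] v by blast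
  then have "A = l \<cdot>\<^sub>m 1\<^sub>m d" using A by (auto simp: C_def mat_eq_iff)
  then show ?thesis ..
qed

subsection \<open>Orthogonality of irreducible characters\<close>

lemma is_rep_mult_entry:
  assumes "is_rep G d \<rho>" "s \<in> carrier G" "t \<in> carrier G" "a < d" "b < d"
  shows "\<rho> (s \<otimes>\<^bsub>G\<^esub> t) $$ (a,b) = (\<Sum>c\<in>{0..<d}. \<rho> s $$ (a,c) * \<rho> t $$ (c,b))"
proof -
  have "\<rho> s \<in> carrier_mat d d" "\<rho> t \<in> carrier_mat d d"
    using assms by (auto simp: is_rep_carrier)
  then show ?thesis using assms by (simp add: is_rep_mult scalar_prod_def)
qed

lemma sum_swap_outer3:
  "(\<Sum>s\<in>A. \<Sum>a\<in>B. \<Sum>b\<in>C. f s a b) = (\<Sum>a\<in>B. \<Sum>b\<in>C. \<Sum>s\<in>A. f s a b)"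
  by (rule trans[OF sum.swap sum.cong[OF refl sum.swap]])

(* The G-average of the matrix unit E_ij, i.e. the sum of rho(h) E_ij sigma(h^-1) over h in G. *)
definition unit_average :: "('g, 'b) monoid_scheme \<Rightarrow> ('g \<Rightarrow> 'k::field mat) \<Rightarrow> ('g \<Rightarrow> 'k mat) \<Rightarrow>
    nat \<Rightarrow> nat \<Rightarrow> nat \<Rightarrow> nat \<Rightarrow> 'k mat" where
  "unit_average G \<rho> \<sigma> d d' i j =
     mat d d' (\<lambda>(a,b). \<Sum>h\<in>carrier G. \<rho> h $$ (a,i) * \<sigma> (inv\<^bsub>G\<^esub> h) $$ (j,b))"

lemma unit_average_carrier: "unit_average G \<rho> \<sigma> d d' i j \<in> carrier_mat d d'"
  by (simp add: unit_average_def)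

context group
begin

lemma sum_reindex_mult_left:
  assumes "s \<in> carrier G"
  shows "sum F (carrier G) = (\<Sum>h\<in>carrier G. F (s \<otimes> h))"
proof -
  have "bij_betw (\<lambda>h. s \<otimes> h) (carrier G) (carrier G)"
    by (rule bij_betw_byWitness[where f' = "\<lambda>h. inv s \<otimes> h"])
       (use assms in \<open>auto simp: m_assoc[symmetric]\<close>)
  then show ?thesis by (simp add: sum.reindex_bij_betw)
qed

lemma sum_reindex_inv: "sum F (carrier G) = (\<Sum>h\<in>carrier G. F (inv h))"
proof -
  have "bij_betw (\<lambda>h. inv h) (carrier G) (carrier G)"
    by (rule bij_betw_byWitness[where f' = "\<lambda>h. inv h"]) auto
  then show ?thesis by (simp add: sum.reindex_bij_betw)
qed

lemma of_nat_card_carrier_neq_zero: "finite (carrier G) \<Longrightarrow> (of_nat (card (carrier G)) :: 'k::field_char_0) \<noteq> 0"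
  using one_closed by (auto simp: card_gt_0_iff[symmetric])

lemma intertwines_unit_average:
  assumes \<rho>: "is_rep G d \<rho>" and \<sigma>: "is_rep G d' \<sigma>" and i: "i < d" and j: "j < d'"
  shows "intertwines G \<rho> \<sigma> (unit_average G \<rho> \<sigma> d d' i j)"
  unfolding intertwines_def
proof
  fix s assume s: "s \<in> carrier G"
  let ?M = "unit_average G \<rho> \<sigma> d d' i j"
  have M: "?M \<in> carrier_mat d d'" by (rule unit_average_carrier)
  have \<rho>s: "\<rho> s \<in> carrier_mat d d" and \<sigma>s: "\<sigma> s \<in> carrier_mat d' d'"
    using \<rho> \<sigma> s by (auto simp: is_rep_carrier)
  show "\<rho> s * ?M = ?M * \<sigma> s"
  proof (rule eq_matI)
    fix a b assume "a < dim_row (?M * \<sigma> s)" "b < dim_col (?M * \<sigma> s)"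
    then have a: "a < d" and b: "b < d'" using M \<sigma>s by auto
    have "(\<rho> s * ?M) $$ (a,b) =
        (\<Sum>h\<in>carrier G. (\<Sum>c\<in>{0..<d}. \<rho> s $$ (a,c) * \<rho> h $$ (c,i)) * \<sigma> (inv h) $$ (j,b))"
      using \<rho>s a b by (simp add: unit_average_def scalar_prod_def sum_distrib_left sum_distrib_right
          mult.assoc sum.swap[of _ "{0..<d}"])
    also have "\<dots> = (\<Sum>h\<in>carrier G. \<rho> (s \<otimes> h) $$ (a,i) * \<sigma> (inv h) $$ (j,b))"
      using \<rho> s a i by (simp add: is_rep_mult_entry)
    also have "\<dots> = (\<Sum>h\<in>carrier G. \<rho> h $$ (a,i) * \<sigma> (inv h \<otimes> s) $$ (j,b))"
      using s by (subst sum_reindex_mult_left[OF s]) (simp add: inv_mult_group m_assoc)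
    also have "\<dots> = (\<Sum>h\<in>carrier G. \<rho> h $$ (a,i) * (\<Sum>c\<in>{0..<d'}. \<sigma> (inv h) $$ (j,c) * \<sigma> s $$ (c,b)))"
      using \<sigma> s j b by (simp add: is_rep_mult_entry)
    also have "\<dots> = (?M * \<sigma> s) $$ (a,b)"
      using \<sigma>s a b by (simp add: unit_average_def scalar_prod_def sum_distrib_left sum_distrib_right
          mult.assoc sum.swap[of _ "{0..<d'}"])
    finally show "(\<rho> s * ?M) $$ (a,b) = (?M * \<sigma> s) $$ (a,b)" .
  qed (use M \<rho>s \<sigma>s in auto)
qed

lemma unit_average_eq_zero:
  assumes irr\<rho>: "irreducible_rep G d \<rho>" and irr\<sigma>: "irreducible_rep G d' \<sigma>"
    and ne: "rep_character G \<rho> \<noteq> rep_character G \<sigma>" and i: "i < d" and j: "j < d'"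
  shows "unit_average G \<rho> \<sigma> d d' i j = 0\<^sub>m d d'"
  using schur_rep_character_eq[OF irr\<rho> irr\<sigma> unit_average_carrier] ne i j
    intertwines_unit_average[OF irreducible_repD(1)[OF irr\<rho>] irreducible_repD(1)[OF irr\<sigma>]]
  by blast

lemma unit_average_self:
  assumes ac: "alg_closed_field TYPE('k::field_char_0)"
    and irr: "irreducible_rep G d (\<rho> :: 'a \<Rightarrow> 'k mat)" and i: "i < d" and j: "j < d"
  shows "unit_average G \<rho> \<rho> d d i j = (if i = j then of_nat (card (carrier G)) / of_nat d else 0) \<cdot>\<^sub>m 1\<^sub>m d"
proof -
  let ?M = "unit_average G \<rho> \<rho> d d i j"
  have \<rho>: "is_rep G d \<rho>" and d: "d > 0" using irr by (auto simp: irreducible_rep_def)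
  obtain l where l: "?M = l \<cdot>\<^sub>m 1\<^sub>m d"
    using schur_scalar[OF ac irr unit_average_carrier intertwines_unit_average[OF \<rho> \<rho> i j]] by blast
  have "of_nat d * l = (\<Sum>a\<in>{0..<d}. ?M $$ (a,a))" using l by simp
  also have "\<dots> = (\<Sum>h\<in>carrier G. \<Sum>a\<in>{0..<d}. \<rho> (inv h) $$ (j,a) * \<rho> h $$ (a,i))"
    by (simp add: unit_average_def mult.commute sum.swap[of _ "{0..<d}"])
  also have "\<dots> = (\<Sum>h\<in>carrier G. \<rho> (inv h \<otimes> h) $$ (j,i))"
    using i j by (intro sum.cong refl) (simp only: is_rep_mult_entry[OF \<rho>] inv_closed)
  also have "\<dots> = (\<Sum>h\<in>carrier G. 1\<^sub>m d $$ (j,i))"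
    using \<rho> by (intro sum.cong refl) (simp add: is_rep_def)
  finally have "of_nat d * l = of_nat (card (carrier G)) * (if i = j then 1 else 0)"
    using i j by auto
  then have "l = (if i = j then of_nat (card (carrier G)) / of_nat d else 0)"
    using d by (auto simp: field_simps)
  then show ?thesis using l by simp
qed

end

lemma irr_chars_obtain:
  assumes "\<psi> \<in> irr_chars G"
  obtains d \<rho> where "irreducible_rep G d \<rho>" "\<psi> = rep_character G \<rho>"
  using assms unfolding irr_chars_def by blast

lemma rep_character_eq_sum:
  assumes "is_rep G d \<rho>" "s \<in> carrier G"
  shows "rep_character G \<rho> s = (\<Sum>a\<in>{0..<d}. \<rho> s $$ (a,a))"
  using assms by (simp add: rep_character_def mat_trace_eq_sum is_rep_carrier)

lemma rep_character_one:
  assumes "is_rep G d \<rho>" "\<one>\<^bsub>G\<^esub> \<in> carrier G"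
  shows "rep_character G \<rho> \<one>\<^bsub>G\<^esub> = of_nat d"
  using assms by (simp add: rep_character_eq_sum) (simp add: is_rep_def)

context group
begin

lemma sum_rep_entry_character:
  assumes \<sigma>: "is_rep G d' \<sigma>" and "a < d" "b < d"
  shows "(\<Sum>s\<in>carrier G. \<rho> s $$ (b,a) * rep_character G \<sigma> (inv s)) =
    (\<Sum>j\<in>{0..<d'}. unit_average G \<rho> \<sigma> d d' a j $$ (b,j))"
  using assms by (simp add: unit_average_def rep_character_eq_sum sum_distrib_left) (rule sum.swap)

lemma sum_rep_entry_irr_character:
  assumes ac: "alg_closed_field TYPE('k::field_char_0)"
    and irr\<rho>: "irreducible_rep G d (\<rho> :: 'a \<Rightarrow> 'k mat)" and irr\<sigma>: "irreducible_rep G d' \<sigma>"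
    and a: "a < d" and b: "b < d"
  shows "(\<Sum>s\<in>carrier G. \<rho> s $$ (b,a) * rep_character G \<sigma> (inv s)) =
    (if rep_character G \<sigma> = rep_character G \<rho> \<and> a = b then of_nat (card (carrier G)) / of_nat d else 0)"
proof (cases "rep_character G \<sigma> = rep_character G \<rho>")
  case False
  then show ?thesis
    using a b unit_average_eq_zero[OF irr\<rho> irr\<sigma>]
    by (simp add: sum_rep_entry_character[OF irreducible_repD(1)[OF irr\<sigma>]])
next
  case True
  then show ?thesis
    using a b unit_average_self[OF ac irr\<rho>]
    by (simp add: sum_rep_entry_character[OF irreducible_repD(1)[OF irr\<rho>]]
        if_distrib[of "\<lambda>x. x * _"] cong: if_cong)
qed

lemma irr_char_orthogonality:
  assumes ac: "alg_closed_field TYPE('k::field_char_0)"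
    and \<phi>: "\<phi> \<in> irr_chars G" and \<psi>: "(\<psi> :: 'a \<Rightarrow> 'k) \<in> irr_chars G" and u: "u \<in> carrier G"
  shows "(\<Sum>s\<in>carrier G. \<phi> (inv s) * \<psi> (inv u \<otimes> s)) =
     (if \<phi> = \<psi> then of_nat (card (carrier G)) / \<psi> \<one> * \<psi> (inv u) else 0)"
proof -
  obtain d \<rho> where irr\<rho>: "irreducible_rep G d \<rho>" and \<psi>_def: "\<psi> = rep_character G \<rho>"
    using \<psi> by (rule irr_chars_obtain)
  obtain d' \<sigma> where irr\<sigma>: "irreducible_rep G d' \<sigma>" and \<phi>_def: "\<phi> = rep_character G \<sigma>"
    using \<phi> by (rule irr_chars_obtain)
  have \<rho>: "is_rep G d \<rho>" using irr\<rho> by (rule irreducible_repD)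
  let ?c = "of_nat (card (carrier G)) / of_nat d :: 'k"
  have "(\<Sum>s\<in>carrier G. \<phi> (inv s) * \<psi> (inv u \<otimes> s)) =
      (\<Sum>s\<in>carrier G. \<Sum>a\<in>{0..<d}. \<Sum>b\<in>{0..<d}. \<rho> (inv u) $$ (a,b) * (\<rho> s $$ (b,a) * \<phi> (inv s)))"
    using \<rho> u by (intro sum.cong refl)
      (simp add: \<psi>_def rep_character_eq_sum is_rep_mult_entry sum_distrib_left sum_distrib_right mult_ac)
  also have "\<dots> = (\<Sum>a\<in>{0..<d}. \<Sum>b\<in>{0..<d}. \<rho> (inv u) $$ (a,b) * (\<Sum>s\<in>carrier G. \<rho> s $$ (b,a) * \<phi> (inv s)))"
    by (subst sum_swap_outer3) (simp add: sum_distrib_left)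
  also have "\<dots> = (\<Sum>a\<in>{0..<d}. if \<phi> = \<psi> then \<rho> (inv u) $$ (a,a) * ?c else 0)"
    using sum_rep_entry_irr_character[OF ac irr\<rho> irr\<sigma>]
    by (intro sum.cong refl) (simp add: \<phi>_def \<psi>_def if_distrib[of "\<lambda>x. _ * x"] cong: if_cong)
  also have "\<dots> = (if \<phi> = \<psi> then ?c * \<psi> (inv u) else 0)"
    using \<rho> u by (simp add: \<psi>_def rep_character_eq_sum sum_distrib_left sum_divide_distrib mult.commute)
  finally show ?thesis using \<rho> by (simp add: \<psi>_def rep_character_one)
qed

lemma irr_char_one_neq_zero:
  assumes "\<psi> \<in> irr_chars G"
  shows "(\<psi> :: 'a \<Rightarrow> 'k::field_char_0) \<one> \<noteq> 0"
proof -
  obtain d \<rho> where irr: "irreducible_rep G d \<rho>" and "\<psi> = rep_character G \<rho>"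
    using assms by (rule irr_chars_obtain)
  then show ?thesis using irreducible_repD[OF irr] by (simp add: rep_character_one)
qed

lemma irr_char_orthogonality_one:
  assumes ac: "alg_closed_field TYPE('k::field_char_0)"
    and \<phi>: "\<phi> \<in> irr_chars G" and \<psi>: "(\<psi> :: 'a \<Rightarrow> 'k) \<in> irr_chars G"
  shows "(\<Sum>s\<in>carrier G. \<phi> (inv s) * \<psi> s) = (if \<phi> = \<psi> then of_nat (card (carrier G)) else 0)"
  using irr_char_orthogonality[OF ac \<phi> \<psi> one_closed] irr_char_one_neq_zero[OF \<psi>] by simp

end

lemma irr_chars_extensional: "\<psi> \<in> irr_chars G \<Longrightarrow> \<psi> \<in> extensional (carrier G)"
  by (auto simp: irr_chars_def rep_character_def)

lemma vector_space_fun: "vector_space (\<lambda>(c::'k::field) (f::'a \<Rightarrow> 'k) x. c * f x)"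
  by unfold_locales (auto simp: fun_eq_iff algebra_simps)

lemma sum_fun_apply: "(\<Sum>i\<in>A. f i) x = (\<Sum>i\<in>A. f i x)"
  by (induct A rule: infinite_finite_induct) auto

context group
begin

lemma finite_irr_chars:
  assumes ac: "alg_closed_field TYPE('k::field_char_0)" and fin: "finite (carrier G)"
  shows "finite (irr_chars G :: ('a \<Rightarrow> 'k) set)"
proof -
  interpret V: vector_space "\<lambda>(c::'k) (f::'a \<Rightarrow> 'k) x. c * f x" by (rule vector_space_fun)
  define restr :: "('a \<Rightarrow> 'k) \<Rightarrow> 'a \<Rightarrow> 'k" where "restr \<psi> x = (if x \<in> carrier G then \<psi> x else 0)" for \<psi> x
  define point :: "'a \<Rightarrow> 'a \<Rightarrow> 'k" where "point g x = (if x = g then 1 else 0)" for g x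
  have inj: "inj_on restr (irr_chars G)"
    by (rule inj_onI, rule extensionalityI[OF irr_chars_extensional irr_chars_extensional])
      (auto simp: restr_def fun_eq_iff split: if_splits)
  have span: "restr ` irr_chars G \<subseteq> V.span (point ` carrier G)"
  proof
    fix f assume "f \<in> restr ` irr_chars G"
    then obtain \<psi> where f: "f = restr \<psi>" by blast
    have "f = (\<Sum>g\<in>carrier G. (\<lambda>x. \<psi> g * point g x))"
      using fin by (auto simp: f restr_def point_def sum_fun_apply fun_eq_iff
          if_distrib[of "\<lambda>z. _ * z"] cong: if_cong)
    also have "\<dots> \<in> V.span (point ` carrier G)"
      by (intro V.span_sum V.span_scale V.span_base) auto
    finally show "f \<in> V.span (point ` carrier G)" .
  qed
  have "V.independent (restr ` irr_chars G)"
    unfolding V.independent_explicit_finite_subsets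
  proof (intro allI impI ballI)
    fix S c v0 assume S: "S \<subseteq> restr ` irr_chars G" and "finite S"
      and sum0: "(\<Sum>v\<in>S. (\<lambda>x. c v * v x)) = 0" and v0: "v0 \<in> S"
    obtain \<psi>0 where \<psi>0: "\<psi>0 \<in> irr_chars G" and v0_def: "v0 = restr \<psi>0" using S v0 by blast
    have orth: "(\<Sum>s\<in>carrier G. v (inv s) * \<psi>0 s) = (if v = v0 then of_nat (card (carrier G)) else 0)"
      if "v \<in> S" for v
    proof -
      obtain \<phi> where \<phi>: "\<phi> \<in> irr_chars G" and v_def: "v = restr \<phi>" using S \<open>v \<in> S\<close> by blast
      then show ?thesis
        using irr_char_orthogonality_one[OF ac \<phi> \<psi>0] inj_on_eq_iff[OF inj \<phi> \<psi>0]
        by (simp add: v0_def restr_def)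
    qed
    have "0 = (\<Sum>s\<in>carrier G. (\<Sum>v\<in>S. c v * v (inv s)) * \<psi>0 s)"
      using fun_cong[OF sum0] by (simp add: sum_fun_apply)
    also have "\<dots> = (\<Sum>v\<in>S. c v * (\<Sum>s\<in>carrier G. v (inv s) * \<psi>0 s))"
      by (simp add: sum_distrib_left sum_distrib_right mult.assoc) (rule sum.swap)
    also have "\<dots> = c v0 * of_nat (card (carrier G))"
      using orth \<open>finite S\<close> v0 by (simp add: if_distrib[of "\<lambda>z. _ * z"] sum.delta' cong: if_cong)
    finally show "c v0 = 0" using of_nat_card_carrier_neq_zero[OF fin] by simp
  qed
  then have "finite (restr ` irr_chars G)"
    using V.independent_span_bound[OF _ _ span] fin by blast
  then show ?thesis using finite_imageD[OF _ inj] by blast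
qed

end

subsection \<open>The group algebra\<close>

definition group_conv :: "('g, 'b) monoid_scheme \<Rightarrow> ('g \<Rightarrow> 'k::comm_ring_1) \<Rightarrow> ('g \<Rightarrow> 'k) \<Rightarrow> 'g \<Rightarrow> 'k" where
  "group_conv G a b u = (\<Sum>s\<in>carrier G. a s * b (inv\<^bsub>G\<^esub> s \<otimes>\<^bsub>G\<^esub> u))"

(* e_psi as a coefficient function on G; char_idem is the same element viewed inside H. *)
definition group_char_idem :: "('g, 'b) monoid_scheme \<Rightarrow> ('g \<Rightarrow> 'k::field) \<Rightarrow> 'g \<Rightarrow> 'k" where
  "group_char_idem G \<psi> u = \<psi> \<one>\<^bsub>G\<^esub> / of_nat (card (carrier G)) * \<psi> (inv\<^bsub>G\<^esub> u)"

context group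
begin

lemma group_conv_cong:
  assumes "\<And>x. x \<in> carrier G \<Longrightarrow> a x = a' x" "\<And>x. x \<in> carrier G \<Longrightarrow> b x = b' x" "u \<in> carrier G"
  shows "group_conv G a b u = group_conv G a' b' u"
  unfolding group_conv_def using assms by (intro sum.cong refl) auto

lemma group_conv_zero_left: "(\<And>x. x \<in> carrier G \<Longrightarrow> a x = 0) \<Longrightarrow> group_conv G a b u = 0"
  by (simp add: group_conv_def)

lemma group_conv_zero_right:
  "u \<in> carrier G \<Longrightarrow> (\<And>x. x \<in> carrier G \<Longrightarrow> b x = 0) \<Longrightarrow> group_conv G a b u = 0"
  by (simp add: group_conv_def)

lemma group_conv_add_left: "group_conv G (\<lambda>x. a x + b x) c u = group_conv G a c u + group_conv G b c u"
  by (simp add: group_conv_def distrib_right sum.distrib)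

lemma group_conv_sum_left: "group_conv G (\<lambda>x. \<Sum>i\<in>I. a i x) c u = (\<Sum>i\<in>I. group_conv G (a i) c u)"
  unfolding group_conv_def by (simp add: sum_distrib_right) (rule sum.swap)

lemma group_conv_assoc:
  assumes u: "u \<in> carrier G"
  shows "group_conv G (group_conv G a b) c u = group_conv G a (group_conv G b c) u"
proof -
  have "group_conv G (group_conv G a b) c u =
      (\<Sum>t\<in>carrier G. \<Sum>s\<in>carrier G. a t * b (inv t \<otimes> s) * c (inv s \<otimes> u))"
    unfolding group_conv_def by (simp add: sum_distrib_right) (rule sum.swap)
  also have "\<dots> = (\<Sum>t\<in>carrier G. \<Sum>r\<in>carrier G. a t * b r * c (inv r \<otimes> (inv t \<otimes> u)))"
  proof (rule sum.cong[OF refl])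
    fix t assume t: "t \<in> carrier G"
    show "(\<Sum>s\<in>carrier G. a t * b (inv t \<otimes> s) * c (inv s \<otimes> u)) =
        (\<Sum>r\<in>carrier G. a t * b r * c (inv r \<otimes> (inv t \<otimes> u)))"
      using t u by (subst sum_reindex_mult_left[OF t]) (simp add: inv_mult_group m_assoc[symmetric])
  qed
  also have "\<dots> = group_conv G a (group_conv G b c) u"
    unfolding group_conv_def by (simp add: sum_distrib_left mult.assoc)
  finally show ?thesis .
qed

lemma group_conv_twist:
  assumes \<chi>: "\<forall>s\<in>carrier G. \<forall>t\<in>carrier G. \<chi> (s \<otimes> t) = \<chi> s * (\<chi> t :: 'k::comm_ring_1)"
    and u: "u \<in> carrier G"
  shows "\<chi> u ^ m * group_conv G a b u = group_conv G (\<lambda>x. \<chi> x ^ m * a x) (\<lambda>x. \<chi> x ^ m * b x) u"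
  unfolding group_conv_def sum_distrib_left
proof (intro sum.cong refl)
  fix s assume s: "s \<in> carrier G"
  have "\<chi> u = \<chi> s * \<chi> (inv s \<otimes> u)"
    using \<chi> s u by (metis inv_closed m_closed inv_solve_left')
  then show "\<chi> u ^ m * (a s * b (inv s \<otimes> u)) = \<chi> s ^ m * a s * (\<chi> (inv s \<otimes> u) ^ m * b (inv s \<otimes> u))"
    by (simp add: power_mult_distrib mult_ac)
qed

lemma irr_char_mult_commute:
  assumes \<psi>: "\<psi> \<in> irr_chars G" and x: "x \<in> carrier G" and y: "y \<in> carrier G"
  shows "\<psi> (x \<otimes> y) = \<psi> (y \<otimes> x)"
proof -
  obtain d \<rho> where irr: "irreducible_rep G d \<rho>" and \<psi>_def: "\<psi> = rep_character G \<rho>"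
    using \<psi> by (rule irr_chars_obtain)
  have \<rho>: "is_rep G d \<rho>" using irr by (rule irreducible_repD)
  then show ?thesis
    using x y mat_trace_mult_comm[OF is_rep_carrier[OF \<rho> x] is_rep_carrier[OF \<rho> y]]
    by (simp add: \<psi>_def rep_character_def is_rep_mult)
qed

lemma group_char_idem_central:
  assumes \<psi>: "\<psi> \<in> irr_chars G" and u: "u \<in> carrier G"
  shows "group_conv G (group_char_idem G \<psi>) b u = group_conv G b (group_char_idem G \<psi>) u"
proof -
  let ?c = "\<psi> \<one> / of_nat (card (carrier G))"
  have "group_conv G (group_char_idem G \<psi>) b u =
      (\<Sum>s\<in>carrier G. ?c * \<psi> (inv (u \<otimes> inv s)) * b (inv (u \<otimes> inv s) \<otimes> u))"
    unfolding group_conv_def group_char_idem_def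
    by (subst sum_reindex_mult_left[OF u], subst sum_reindex_inv) simp
  also have "\<dots> = (\<Sum>s\<in>carrier G. b s * (?c * \<psi> (inv u \<otimes> s)))"
  proof (intro sum.cong refl)
    fix s assume s: "s \<in> carrier G"
    have "inv (u \<otimes> inv s) = s \<otimes> inv u" and "inv (u \<otimes> inv s) \<otimes> u = s"
      using s u by (simp_all add: inv_mult_group m_assoc)
    moreover have "\<psi> (s \<otimes> inv u) = \<psi> (inv u \<otimes> s)" using s u by (intro irr_char_mult_commute[OF \<psi>]) auto
    ultimately show "?c * \<psi> (inv (u \<otimes> inv s)) * b (inv (u \<otimes> inv s) \<otimes> u) = b s * (?c * \<psi> (inv u \<otimes> s))"
      by (simp add: mult_ac)
  qed
  also have "\<dots> = group_conv G b (group_char_idem G \<psi>) u"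
    unfolding group_conv_def group_char_idem_def using u by (intro sum.cong refl) (simp add: inv_mult_group)
  finally show ?thesis .
qed

lemma group_char_idem_one_neq_zero:
  assumes "finite (carrier G)" "\<psi> \<in> irr_chars G"
  shows "group_char_idem G (\<psi> :: 'a \<Rightarrow> 'k::field_char_0) \<one> \<noteq> 0"
  using of_nat_card_carrier_neq_zero[OF assms(1)] irr_char_one_neq_zero[OF assms(2)]
  by (simp add: group_char_idem_def)

lemma group_char_idem_mult:
  assumes ac: "alg_closed_field TYPE('k::field_char_0)" and fin: "finite (carrier G)"
    and \<phi>: "\<phi> \<in> irr_chars G" and \<psi>: "(\<psi> :: 'a \<Rightarrow> 'k) \<in> irr_chars G" and u: "u \<in> carrier G"
  shows "group_conv G (group_char_idem G \<phi>) (group_char_idem G \<psi>) u =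
    (if \<phi> = \<psi> then group_char_idem G \<psi> u else 0)"
proof -
  let ?N = "of_nat (card (carrier G)) :: 'k"
  have "group_conv G (group_char_idem G \<phi>) (group_char_idem G \<psi>) u =
      \<phi> \<one> / ?N * (\<psi> \<one> / ?N) * (\<Sum>s\<in>carrier G. \<phi> (inv s) * \<psi> (inv u \<otimes> s))"
    unfolding group_conv_def group_char_idem_def sum_distrib_left
    using u by (intro sum.cong refl) (simp add: inv_mult_group mult_ac)
  also have "\<dots> = (if \<phi> = \<psi> then group_char_idem G \<psi> u else 0)"
    using irr_char_orthogonality[OF ac \<phi> \<psi> u] of_nat_card_carrier_neq_zero[OF fin] irr_char_one_neq_zero[OF \<psi>]
    by (auto simp: group_char_idem_def field_simps power2_eq_square)
  finally show ?thesis .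
qed

end

subsection \<open>Ideals of H\<close>

lemma Hmult_in_Hcarrier: "Hmult G \<chi> n a b \<in> Hcarrier G n"
  unfolding Hmult_def Hcarrier_def by auto

lemma Hideal_gen_self: "x \<in> Hideal_gen G \<chi> n x"
  unfolding Hideal_gen_def by blast

lemma Hideal_gen_least: "Hideal G \<chi> n I \<Longrightarrow> x \<in> I \<Longrightarrow> Hideal_gen G \<chi> n x \<subseteq> I"
  unfolding Hideal_gen_def by blast

lemma Hmult_vanishes_below:
  assumes "\<And>u i. i < m \<Longrightarrow> f u i = 0" and "j < m"
  shows "Hmult G \<chi> n h f u j = 0" and "Hmult G \<chi> n f h u j = 0"
  using assms unfolding Hmult_def by (auto intro!: sum.neutral)

lemma (in group) Hmult_coeff_left:
  assumes "\<And>u i. i < m \<Longrightarrow> f u i = 0" and "m < n" and "u \<in> carrier G"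
  shows "Hmult G \<chi> n h f u m = group_conv G (\<lambda>v. h v 0) (\<lambda>v. f v m) u"
proof -
  have "(\<Sum>i\<le>m. h s i * f (inv s \<otimes> u) (m - i) * \<chi> (inv s \<otimes> u) ^ i) = h s 0 * f (inv s \<otimes> u) m" for s
    using assms(1) by (subst sum.remove[of _ 0]) (auto intro!: sum.neutral)
  then show ?thesis using assms(2,3) by (simp add: Hmult_def group_conv_def)
qed

lemma (in group) Hmult_coeff_right:
  assumes "\<And>u i. i < m \<Longrightarrow> f u i = 0" and "m < n" and "u \<in> carrier G"
  shows "Hmult G \<chi> n f h u m = group_conv G (\<lambda>v. f v m) (\<lambda>v. \<chi> v ^ m * h v 0) u"
proof -
  have "(\<Sum>i\<le>m. f s i * h (inv s \<otimes> u) (m - i) * \<chi> (inv s \<otimes> u) ^ i) =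
      f s m * (\<chi> (inv s \<otimes> u) ^ m * h (inv s \<otimes> u) 0)" for s
    using assms(1) by (subst sum.remove[of _ m]) (auto intro!: sum.neutral)
  then show ?thesis using assms(2,3) by (simp add: Hmult_def group_conv_def)
qed

lemma (in group) Hmult_basis_idem_sum:
  assumes "m < n" and "finite (carrier G)"
  shows "Hmult G \<chi> n (Hbasis \<one> m) (idem_sum G T) u j =
    (if u \<in> carrier G \<and> j = m then \<chi> u ^ m * (\<Sum>\<phi>\<in>T. group_char_idem G \<phi> u) else 0)"
proof (cases "u \<in> carrier G \<and> j < n")
  case True
  have "(\<Sum>i\<le>j. Hbasis \<one> m s i * idem_sum G T (inv s \<otimes> u) (j - i) * \<chi> (inv s \<otimes> u) ^ i) =
      (if s = \<one> \<and> m \<le> j then idem_sum G T u (j - m) * \<chi> u ^ m else 0)" for s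
    using True by (auto simp: Hbasis_def if_distrib[of "\<lambda>x. x * _"] sum.delta cong: if_cong)
  then have "Hmult G \<chi> n (Hbasis \<one> m) (idem_sum G T) u j =
      (if m \<le> j then idem_sum G T u (j - m) * \<chi> u ^ m else 0)"
    using True assms(2) by (simp add: Hmult_def mult.assoc sum.delta' cong: if_cong)
  then show ?thesis
    using True by (auto simp: idem_sum_def char_idem_def group_char_idem_def mult.commute)
qed (use assms in \<open>auto simp: Hmult_def\<close>)

definition Hannihilator :: "('g, 'b) monoid_scheme \<Rightarrow> ('g \<Rightarrow> 'k::field) \<Rightarrow> nat \<Rightarrow> nat \<Rightarrow> ('g \<Rightarrow> 'k) \<Rightarrow>
    ('g \<Rightarrow> nat \<Rightarrow> 'k) set" where
  "Hannihilator G \<chi> n m \<psi> = {f \<in> Hcarrier G n. (\<forall>u i. i < m \<longrightarrow> f u i = 0) \<and>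
     (\<forall>u\<in>carrier G. group_conv G (\<lambda>v. f v m) (\<lambda>v. \<chi> v ^ m * group_char_idem G \<psi> v) u = 0)}"

context group
begin

lemma twisted_char_idem_central:
  assumes \<chi>: "\<forall>s\<in>carrier G. \<forall>t\<in>carrier G. \<chi> (s \<otimes> t) = \<chi> s * (\<chi> t :: 'k::field)"
    and \<psi>: "\<psi> \<in> irr_chars G" and u: "u \<in> carrier G"
  shows "group_conv G (\<lambda>v. \<chi> v ^ m * b v) (\<lambda>v. \<chi> v ^ m * group_char_idem G \<psi> v) u =
    group_conv G (\<lambda>v. \<chi> v ^ m * group_char_idem G \<psi> v) (\<lambda>v. \<chi> v ^ m * b v) u"
  using group_conv_twist[OF \<chi> u] group_char_idem_central[OF \<psi> u] by metis

lemma Hannihilator_mult_left: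
  assumes mn: "m < n" and f: "f \<in> Hannihilator G \<chi> n m \<psi>"
  shows "Hmult G \<chi> n h f \<in> Hannihilator G \<chi> n m \<psi>"
proof -
  let ?e = "\<lambda>v. \<chi> v ^ m * group_char_idem G \<psi> v"
  have low: "\<And>u i. i < m \<Longrightarrow> f u i = 0"
    and ann: "\<And>u. u \<in> carrier G \<Longrightarrow> group_conv G (\<lambda>v. f v m) ?e u = 0"
    using f by (auto simp: Hannihilator_def)
  have "group_conv G (\<lambda>v. Hmult G \<chi> n h f v m) ?e u = 0" if u: "u \<in> carrier G" for u
  proof -
    have "group_conv G (\<lambda>v. Hmult G \<chi> n h f v m) ?e u =
        group_conv G (group_conv G (\<lambda>v. h v 0) (\<lambda>v. f v m)) ?e u"
      using low mn u by (intro group_conv_cong) (auto simp: Hmult_coeff_left)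
    also have "\<dots> = group_conv G (\<lambda>v. h v 0) (group_conv G (\<lambda>v. f v m) ?e) u"
      by (rule group_conv_assoc[OF u])
    also have "\<dots> = 0"
      by (rule group_conv_zero_right[OF u ann])
    finally show ?thesis .
  qed
  then show ?thesis
    by (auto simp: Hannihilator_def Hmult_in_Hcarrier Hmult_vanishes_below[OF low])
qed

lemma Hannihilator_mult_right:
  assumes \<chi>: "\<forall>s\<in>carrier G. \<forall>t\<in>carrier G. \<chi> (s \<otimes> t) = \<chi> s * (\<chi> t :: 'k::field)"
    and mn: "m < n" and \<psi>: "\<psi> \<in> irr_chars G" and f: "f \<in> Hannihilator G \<chi> n m \<psi>"
  shows "Hmult G \<chi> n f h \<in> Hannihilator G \<chi> n m \<psi>"
proof -
  let ?e = "\<lambda>v. \<chi> v ^ m * group_char_idem G \<psi> v"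
  let ?h = "\<lambda>v. \<chi> v ^ m * h v 0"
  have low: "\<And>u i. i < m \<Longrightarrow> f u i = 0"
    and ann: "\<And>u. u \<in> carrier G \<Longrightarrow> group_conv G (\<lambda>v. f v m) ?e u = 0"
    using f by (auto simp: Hannihilator_def)
  have "group_conv G (\<lambda>v. Hmult G \<chi> n f h v m) ?e u = 0" if u: "u \<in> carrier G" for u
  proof -
    have "group_conv G (\<lambda>v. Hmult G \<chi> n f h v m) ?e u = group_conv G (group_conv G (\<lambda>v. f v m) ?h) ?e u"
      using low mn u by (intro group_conv_cong) (auto simp: Hmult_coeff_right)
    also have "\<dots> = group_conv G (\<lambda>v. f v m) (group_conv G ?h ?e) u"
      by (rule group_conv_assoc[OF u])
    also have "\<dots> = group_conv G (\<lambda>v. f v m) (group_conv G ?e ?h) u"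
      by (rule group_conv_cong) (use u in \<open>auto simp: twisted_char_idem_central[OF \<chi> \<psi>]\<close>)
    also have "\<dots> = group_conv G (group_conv G (\<lambda>v. f v m) ?e) ?h u"
      by (rule group_conv_assoc[OF u, symmetric])
    also have "\<dots> = 0" by (rule group_conv_zero_left[OF ann])
    finally show ?thesis .
  qed
  then show ?thesis
    by (auto simp: Hannihilator_def Hmult_in_Hcarrier Hmult_vanishes_below[OF low])
qed

lemma Hideal_Hannihilator:
  assumes \<chi>: "\<forall>s\<in>carrier G. \<forall>t\<in>carrier G. \<chi> (s \<otimes> t) = \<chi> s * (\<chi> t :: 'k::field)"
    and mn: "m < n" and \<psi>: "\<psi> \<in> irr_chars G"
  shows "Hideal G \<chi> n (Hannihilator G \<chi> n m \<psi>)"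
  unfolding Hideal_def
proof (intro conjI ballI)
  let ?I = "Hannihilator G \<chi> n m \<psi>"
  show "?I \<subseteq> Hcarrier G n" by (auto simp: Hannihilator_def)
  show "Hzero \<in> ?I" by (auto simp: Hannihilator_def Hzero_def Hcarrier_def group_conv_def)
  show "Hadd a b \<in> ?I" if "a \<in> ?I" "b \<in> ?I" for a b
    using that by (auto simp: Hannihilator_def Hadd_def Hcarrier_def group_conv_add_left)
qed (simp_all add: Hannihilator_mult_left[OF mn] Hannihilator_mult_right[OF \<chi> mn \<psi>])

lemma Hmult_basis_idem_sum_in_Hannihilator_iff:
  assumes ac: "alg_closed_field TYPE('k::field_char_0)" and fin: "finite (carrier G)"
    and \<chi>0: "\<forall>s\<in>carrier G. \<chi> s \<noteq> (0 :: 'k)"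
    and \<chi>: "\<forall>s\<in>carrier G. \<forall>t\<in>carrier G. \<chi> (s \<otimes> t) = \<chi> s * \<chi> t"
    and mn: "m < n" and S: "S \<subseteq> irr_chars G" and \<psi>: "\<psi> \<in> irr_chars G"
  shows "Hmult G \<chi> n (Hbasis \<one> m) (idem_sum G S) \<in> Hannihilator G \<chi> n m \<psi> \<longleftrightarrow> \<psi> \<notin> S"
proof -
  let ?x = "Hmult G \<chi> n (Hbasis \<one> m) (idem_sum G S)"
  have "finite S" using finite_subset[OF S finite_irr_chars[OF ac fin]] .
  have coeff: "group_conv G (\<lambda>v. ?x v m) (\<lambda>v. \<chi> v ^ m * group_char_idem G \<psi> v) u =
      (if \<psi> \<in> S then \<chi> u ^ m * group_char_idem G \<psi> u else 0)" if u: "u \<in> carrier G" for u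
  proof -
    have "group_conv G (\<lambda>v. ?x v m) (\<lambda>v. \<chi> v ^ m * group_char_idem G \<psi> v) u =
        \<chi> u ^ m * group_conv G (\<lambda>v. \<Sum>\<phi>\<in>S. group_char_idem G \<phi> v) (group_char_idem G \<psi>) u"
      using u mn fin by (simp add: group_conv_twist[OF \<chi> u] Hmult_basis_idem_sum cong: group_conv_cong)
    also have "\<dots> = \<chi> u ^ m * (\<Sum>\<phi>\<in>S. if \<phi> = \<psi> then group_char_idem G \<psi> u else 0)"
      using S u by (simp add: group_conv_sum_left group_char_idem_mult[OF ac fin _ \<psi>] subset_iff)
    finally show ?thesis using \<open>finite S\<close> by (simp add: sum.delta')
  qed
  show ?thesis
  proof
    assume "?x \<in> Hannihilator G \<chi> n m \<psi>"
    then have "group_conv G (\<lambda>v. ?x v m) (\<lambda>v. \<chi> v ^ m * group_char_idem G \<psi> v) \<one> = 0"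
      by (simp add: Hannihilator_def)
    then show "\<psi> \<notin> S"
      using coeff[OF one_closed] \<chi>0 group_char_idem_one_neq_zero[OF fin \<psi>] by (auto split: if_splits)
  next
    assume "\<psi> \<notin> S"
    then show "?x \<in> Hannihilator G \<chi> n m \<psi>"
      using coeff mn fin by (simp add: Hannihilator_def Hmult_in_Hcarrier Hmult_basis_idem_sum)
  qed
qed

lemma Hmult_basis_idem_sum_notin_Hideal_gen:
  assumes ac: "alg_closed_field TYPE('k::field_char_0)" and fin: "finite (carrier G)"
    and \<chi>0: "\<forall>s\<in>carrier G. \<chi> s \<noteq> (0 :: 'k)"
    and \<chi>: "\<forall>s\<in>carrier G. \<forall>t\<in>carrier G. \<chi> (s \<otimes> t) = \<chi> s * \<chi> t"
    and mn: "m < n" and S: "S \<subseteq> irr_chars G" and T: "T \<subseteq> irr_chars G"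
    and "\<psi> \<in> S" and "\<psi> \<notin> T"
  shows "Hmult G \<chi> n (Hbasis \<one> m) (idem_sum G S)
    \<notin> Hideal_gen G \<chi> n (Hmult G \<chi> n (Hbasis \<one> m) (idem_sum G T))"
proof -
  have \<psi>: "\<psi> \<in> irr_chars G" using S \<open>\<psi> \<in> S\<close> by blast
  note iff = Hmult_basis_idem_sum_in_Hannihilator_iff[OF ac fin \<chi>0 \<chi> mn _ \<psi>]
  have "Hideal_gen G \<chi> n (Hmult G \<chi> n (Hbasis \<one> m) (idem_sum G T)) \<subseteq> Hannihilator G \<chi> n m \<psi>"
    using Hideal_gen_least[OF Hideal_Hannihilator[OF \<chi> mn \<psi>]] iff[OF T] \<open>\<psi> \<notin> T\<close> by blast
  then show ?thesis using iff[OF S] \<open>\<psi> \<in> S\<close> by blast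
qed

end

theorem corollary3p7:
  fixes G :: "'g monoid" and \<chi> :: "'g \<Rightarrow> 'k::field_char_0" and g :: 'g and n :: nat
  assumes "alg_closed_field TYPE('k)"
    and "group G" and "finite (carrier G)"
    and "\<forall>s\<in>carrier G. \<chi> s \<noteq> 0"
    and "\<forall>s\<in>carrier G. \<forall>t\<in>carrier G. \<chi> (s \<otimes>\<^bsub>G\<^esub> t) = \<chi> s * \<chi> t"
    and "g \<in> carrier G" and "\<forall>s\<in>carrier G. g \<otimes>\<^bsub>G\<^esub> s = s \<otimes>\<^bsub>G\<^esub> g"
    and "n \<ge> 2" and "\<chi> g ^ n = 1" and "\<forall>j. 0 < j \<and> j < n \<longrightarrow> \<chi> g ^ j \<noteq> 1"
    and "m < n"
    and "S \<subseteq> irr_chars G" and "S \<noteq> {}"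
    and "T \<subseteq> irr_chars G" and "T \<noteq> {}"
    and "S \<noteq> T"
  shows "Hideal_gen G \<chi> n (Hmult G \<chi> n (Hbasis \<one>\<^bsub>G\<^esub> m) (idem_sum G S))
       \<noteq> Hideal_gen G \<chi> n (Hmult G \<chi> n (Hbasis \<one>\<^bsub>G\<^esub> m) (idem_sum G T))"
proof
  note separate = group.Hmult_basis_idem_sum_notin_Hideal_gen[OF assms(2,1,3,4,5,11)]
  assume eq: "Hideal_gen G \<chi> n (Hmult G \<chi> n (Hbasis \<one>\<^bsub>G\<^esub> m) (idem_sum G S))
       = Hideal_gen G \<chi> n (Hmult G \<chi> n (Hbasis \<one>\<^bsub>G\<^esub> m) (idem_sum G T))"
  from \<open>S \<noteq> T\<close> obtain \<psi> where "\<psi> \<in> S \<and> \<psi> \<notin> T \<or> \<psi> \<in> T \<and> \<psi> \<notin> S" by blast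
  then show False
    using separate[OF assms(12,14)] separate[OF assms(14,12)] eq Hideal_gen_self by metis
qed

end
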